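(* Let $g\in\mathcal{G}'=\{g^{\mathbf{s}}:\mathbf{s}\in\{1,2\}^n,n\in\mathbb{N}_0\}$. Then: (a) if $k$ is the largest vertex adjacent to $g$, then $k\ge7$, and the set of edges $[i,j]$ with $w_g([i,j])\ne0$ consists of the two triangles $[1,2],[1,3],[2,3]$ and $[k-2,k-1],[k-2,k],[k-1,k]$, with $w_g([1,3])=w_g([2,3])=-w_g([1,2])=-1$ and $w_g([k-2,k-1])=w_g([k-2,k])=-w_g([k-1,k])\in\{1,-1\}$, together with a path $[3,5]=[i_1,i_2],\dots,[i_{l-1},i_l]=[k-4,k-2]$ with $[i_1,i_2]<\cdots<[i_{l-1},i_l]$ whose edge weights alternate between $2$ and $-2$ and which contains no two consecutive edges of the form $[j-1,j],[j,j+1]$; (b) $\deg g=4+\sum_{i=1}^ns_i$ if $g=g^{\mathbf{s}}$ with $\mathbf{s}=(s_1,\dots,s_n)$; (c) $g\in I=\ker\varphi$.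
   Context: $\mathbb{K}$ is a field, $R=\mathbb{K}[x_{i,i+1},x_{i,i+2}: i\in\mathbb{N}]$, $\varphi:R\to\mathbb{K}[x_i:i\in\mathbb{N}]$ with $x_{i,i+1}\mapsto x_ix_{i+1}$, $x_{i,i+2}\mapsto x_ix_{i+2}$. $E=\{[i,i+1],[i,i+2]:i\in\mathbb{N}\}$ is totally ordered by $[i,j]\le[k,l]$ iff $i\le k$ and $j\le l$. For a binomial $g=\prod x_{i,j}^{u_{i,j}}-\prod x_{i,j}^{v_{i,j}}$, $w_g([i,j])=u_{i,j}-v_{i,j}$; conversely a finitely supported $w:E\to\mathbb{Z}$ has associated binomial $\prod x_{i,j}^{\max(w([i,j]),0)}-\prod x_{i,j}^{\max(-w([i,j]),0)}$. A vertex $n$ is adjacent to $g$ if $n\in\{i,j\}$ for some $[i,j]$ with $w_g([i,j])\ne0$. Define $g^{\emptyset}=x_{1,2}x_{3,5}^2x_{6,7}-x_{1,3}x_{2,3}x_{5,6}x_{5,7}$ and recursively, for $\mathbf{s}=(s_1,\dots,s_n)$, with $w=w_{g^{\mathbf{s}}}$ and $k$ the largest vertex adjacent to $g^{\mathbf{s}}$: $g^{(s_1,\dots,s_n,1)}$ is the binomial of the weight $[i,j]\mapsto w([i,j])$ if $[i,j]\le[k-4,k-2]$, $2w([i,j])$ if $[i,j]=[k-2,k]$, $-w([i-2,j-2])$ if $[i,j]\ge[k,k+1]$, $0$ otherwise; $g^{(s_1,\dots,s_n,2)}$ is the binomial of the weight $[i,j]\mapsto w([i,j])$ if $[i,j]\le[k-4,k-2]$,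 $2w([i,j])$ if $[i,j]=[k-2,k-1]$, $-2w([k-2,k-1])$ if $[i,j]=[k-1,k+1]$, $w([i-3,j-3])$ if $[i,j]\ge[k+1,k+2]$, $0$ otherwise. *)

theory Defs
  imports Main "HOL-Library.Poly_Mapping"
begin

text \<open>Edges [i,j] are pairs (i,j) of vertices; vertices are 1,2,3,...
  Weights are functions from pairs to int (supported on E).\<close>

type_synonym edge = "nat \<times> nat"
type_synonym weight = "edge \<Rightarrow> int"

text \<open>Polynomials over 'k in variables x_e (e a pair of vertices): exponent vectors
  (monomials) are finitely supported maps edge to nat.\<close>
type_synonym 'k epoly = "(edge \<Rightarrow>\<^sub>0 nat) \<Rightarrow>\<^sub>0 'k"
type_synonym 'k vpoly = "(nat \<Rightarrow>\<^sub>0 nat) \<Rightarrow>\<^sub>0 'k"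

definition inE :: "edge \<Rightarrow> bool" where
  "inE e \<longleftrightarrow> 1 \<le> fst e \<and> (snd e = fst e + 1 \<or> snd e = fst e + 2)"

definition edge_le :: "edge \<Rightarrow> edge \<Rightarrow> bool" where
  "edge_le e f \<longleftrightarrow> fst e \<le> fst f \<and> snd e \<le> snd f"

definition edge_less :: "edge \<Rightarrow> edge \<Rightarrow> bool" where
  "edge_less e f \<longleftrightarrow> edge_le e f \<and> e \<noteq> f"

definition maxv :: "weight \<Rightarrow> nat" where
  "maxv w = Max {n. \<exists>e. w e \<noteq> 0 \<and> (n = fst e \<or> n = snd e)}"

text \<open>weight of g^{()} = x12 x35^2 x67 - x13 x23 x56 x57\<close>
definition w0 :: weight where
  "w0 e = (if e = (1,2) then 1 else if e = (3,5) then 2 else if e = (6,7) then 1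
      else if e = (1,3) \<or> e = (2,3) \<or> e = (5,6) \<or> e = (5,7) then -1 else 0)"

definition step1 :: "weight \<Rightarrow> weight" where
  "step1 w = (let k = maxv w in (\<lambda>(i,j).
     if \<not> inE (i,j) then 0
     else if edge_le (i,j) (k-4,k-2) then w (i,j)
     else if (i,j) = (k-2,k) then 2 * w (i,j)
     else if edge_le (k,k+1) (i,j) then - w (i-2,j-2)
     else 0))"

definition step2 :: "weight \<Rightarrow> weight" where
  "step2 w = (let k = maxv w in (\<lambda>(i,j).
     if \<not> inE (i,j) then 0
     else if edge_le (i,j) (k-4,k-2) then w (i,j)
     else if (i,j) = (k-2,k-1) then 2 * w (i,j)
     else if (i,j) = (k-1,k+1) then -2 * w (k-2,k-1)
     else if edge_le (k+1,k+2) (i,j) then w (i-3,j-3)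
     else 0))"

definition step :: "nat \<Rightarrow> weight \<Rightarrow> weight" where
  "step t w = (if t = 1 then step1 w else step2 w)"

text \<open>weight of g^s, s = (s_1,...,s_n); s is extended at the end\<close>
definition W :: "nat list \<Rightarrow> weight" where
  "W s = foldl (\<lambda>w t. step t w) w0 s"

definition posmon :: "weight \<Rightarrow> edge \<Rightarrow>\<^sub>0 nat" where
  "posmon w = Abs_poly_mapping (\<lambda>e. nat (w e))"

definition negmon :: "weight \<Rightarrow> edge \<Rightarrow>\<^sub>0 nat" where
  "negmon w = Abs_poly_mapping (\<lambda>e. nat (- w e))"

definition binom :: "weight \<Rightarrow> 'k::field epoly" where
  "binom w = Poly_Mapping.single (posmon w) 1 - Poly_Mapping.single (negmon w) 1"

definition mdeg :: "('a \<Rightarrow>\<^sub>0 nat) \<Rightarrow> nat" where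
  "mdeg m = (\<Sum>e\<in>Poly_Mapping.keys m. Poly_Mapping.lookup m e)"

definition deg :: "'k::zero epoly \<Rightarrow> nat" where
  "deg p = Max (insert 0 (mdeg ` Poly_Mapping.keys p))"

text \<open>phi: x_{i,j} \<mapsto> x_i x_j, extended multiplicatively and K-linearly\<close>
definition vmon :: "(edge \<Rightarrow>\<^sub>0 nat) \<Rightarrow> (nat \<Rightarrow>\<^sub>0 nat)" where
  "vmon m = Abs_poly_mapping (\<lambda>n. \<Sum>e\<in>Poly_Mapping.keys m.
      ((if fst e = n then 1 else 0) + (if snd e = n then 1 else 0)) * Poly_Mapping.lookup m e)"

definition phi :: "'k::field epoly \<Rightarrow> 'k vpoly" where
  "phi p = (\<Sum>m\<in>Poly_Mapping.keys p. Poly_Mapping.single (vmon m) (Poly_Mapping.lookup p m))"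

end

(*
  Every g^s has the weight of a "shape": the triangle on 1, 2, 3, a path
  3 = i_1 < i_2 < ... < i_l with weights 2, -2, 2, ..., and a triangle on i_l, i_l + 1, i_l + 2.
  A step of the recursion only touches the final triangle: step 1 replaces it by the path edge
  [i_l, i_l + 2] and the triangle on i_l + 2, step 2 by the path edges [i_l, i_l + 1],
  [i_l + 1, i_l + 3] and the triangle on i_l + 3.  This gives (a) by induction on s.
  In a shape weight every vertex is balanced (the signed weights of the edges at it cancel), so phi
  sends both monomials of the binomial to the same monomial, which is (c).  The weights also sum to 0
  and their absolute values to 2 (l + 2), so both monomials have degree l + 2 = 4 + s_1 + ... + s_n,
  which is (b).
*)
theory Submission
  imports Defs
begin

section \<open>Weights given by lists of weighted edges\<close>

definition edge_weight :: "(edge \<times> int) list \<Rightarrow> weight" where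
  "edge_weight l e = (\<Sum>(e', v)\<leftarrow>l. if e' = e then v else 0)"

lemma edge_weight_Nil [simp]: "edge_weight [] e = 0"
  and edge_weight_Cons [simp]:
    "edge_weight ((e', v) # l) e = (if e' = e then v else 0) + edge_weight l e"
  and edge_weight_append [simp]: "edge_weight (l @ l') e = edge_weight l e + edge_weight l' e"
  by (simp_all add: edge_weight_def)

lemma edge_weight_eq_0: "e \<notin> fst ` set l \<Longrightarrow> edge_weight l e = 0"
  by (induction l) auto

lemma edge_weight_eq:
  assumes "distinct (map fst l)" "(e, v) \<in> set l"
  shows "edge_weight l e = v"
  using assms
proof (induction l)
  case (Cons x l)
  then show ?case
    by (cases x) (auto simp: edge_weight_eq_0 image_iff)
qed simp

lemma sum_edge_weight:
  assumes "distinct (map fst l)" "\<And>e. G e 0 = 0"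
  shows "(\<Sum>e\<in>fst ` set l. G e (edge_weight l e)) = (\<Sum>(e, v)\<leftarrow>l. G e v)"
proof -
  have "(\<Sum>e\<in>fst ` set l. G e (edge_weight l e))
      = (\<Sum>x\<in>set l. G (fst x) (edge_weight l (fst x)))"
    using assms(1) by (subst sum.reindex) (auto simp: distinct_map)
  also have "\<dots> = (\<Sum>x\<in>set l. G (fst x) (snd x))"
    by (intro sum.cong refl) (metis assms(1) edge_weight_eq prod.collapse)
  also have "\<dots> = (\<Sum>(e, v)\<leftarrow>l. G e v)"
    using assms(1) by (simp add: sum.distinct_set_conv_list distinct_map split_def)
  finally show ?thesis .
qed

definition end_triangle :: "nat \<Rightarrow> int \<Rightarrow> (edge \<times> int) list" where
  "end_triangle h c = [((h, h + 1), c), ((h, h + 2), c), ((h + 1, h + 2), - c)]"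

lemma edge_weight_end_triangle:
  "edge_weight (end_triangle h c) e
     = (if e = (h, h + 1) \<or> e = (h, h + 2) then c else if e = (h + 1, h + 2) then - c else 0)"
  by (auto simp: end_triangle_def)

lemma edge_weight_end_triangle_outside_E:
  "0 < h \<Longrightarrow> \<not> inE e \<Longrightarrow> edge_weight (end_triangle h c) e = 0"
  by (auto simp: edge_weight_end_triangle inE_def)

lemma edge_weight_end_triangle_shift:
  "edge_weight (end_triangle (h + d) c) (a + d, a' + d)
    = edge_weight (end_triangle h c) (a, a')"
  by (simp add: edge_weight_end_triangle)

lemma edge_weight_end_triangle_uminus:
  "edge_weight (end_triangle h (- c)) e = - edge_weight (end_triangle h c) e"
  by (simp add: edge_weight_end_triangle)

section \<open>Binomials of weights\<close>

definition incidence :: "edge \<Rightarrow> nat \<Rightarrow> nat" where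
  "incidence e n = (if fst e = n then 1 else 0) + (if snd e = n then 1 else 0)"

lemma lookup_vmon:
  "Poly_Mapping.lookup (vmon m) n
    = (\<Sum>e\<in>Poly_Mapping.keys m. incidence e n * Poly_Mapping.lookup m e)"
proof -
  let ?f = "\<lambda>n. \<Sum>e\<in>Poly_Mapping.keys m. incidence e n * Poly_Mapping.lookup m e"
  have "{n. ?f n \<noteq> 0} \<subseteq> fst ` Poly_Mapping.keys m \<union> snd ` Poly_Mapping.keys m"
    by (auto simp: incidence_def elim!: sum.not_neutral_contains_not_neutral split: if_splits)
  then have "finite {n. ?f n \<noteq> 0}"
    by (rule finite_subset) simp
  then show ?thesis
    by (simp add: vmon_def incidence_def)
qed

lemma lookup_posmon:
  "finite {e. w e \<noteq> 0} \<Longrightarrow> Poly_Mapping.lookup (posmon w) = (\<lambda>e. nat (w e))"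
  unfolding posmon_def by (rule lookup_Abs_poly_mapping) (auto elim: finite_subset[rotated])

lemma negmon_eq_posmon: "negmon w = posmon (\<lambda>e. - w e)"
  by (simp add: negmon_def posmon_def)

lemma sum_keys_posmon:
  assumes "finite S" "{e. w e \<noteq> 0} \<subseteq> S" "\<And>e. f e 0 = 0"
  shows "(\<Sum>e\<in>Poly_Mapping.keys (posmon w). f e (Poly_Mapping.lookup (posmon w) e))
    = (\<Sum>e\<in>S. f e (nat (w e)))"
proof -
  have lookup: "Poly_Mapping.lookup (posmon w) = (\<lambda>e. nat (w e))"
    using assms(1,2) by (intro lookup_posmon) (rule finite_subset)
  have "(\<Sum>e\<in>Poly_Mapping.keys (posmon w). f e (Poly_Mapping.lookup (posmon w) e))
      = (\<Sum>e\<in>S. f e (Poly_Mapping.lookup (posmon w) e))"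
    using assms by (intro sum.mono_neutral_left) (auto simp: in_keys_iff lookup)
  then show ?thesis
    by (simp add: lookup)
qed

lemma posmon_neq_negmon:
  assumes "finite {e. w e \<noteq> 0}" "w e \<noteq> 0"
  shows "posmon w \<noteq> negmon w"
proof
  assume "posmon w = negmon w"
  then have "Poly_Mapping.lookup (posmon w) e = Poly_Mapping.lookup (posmon (\<lambda>e. - w e)) e"
    by (simp add: negmon_eq_posmon)
  with assms show False
    by (simp add: lookup_posmon)
qed

lemma keys_binom:
  "posmon w \<noteq> negmon w
    \<Longrightarrow> Poly_Mapping.keys (binom w :: 'k::field epoly) = {posmon w, negmon w}"
  by (auto simp: binom_def keys_def lookup_minus lookup_single when_def)

lemma lookup_binom:
  "Poly_Mapping.lookup (binom w :: 'k::field epoly) m = (1 when m = posmon w) - (1 when m = negmon w)"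
  by (auto simp: binom_def lookup_minus lookup_single when_def)

lemma phi_binom_eq_0:
  assumes "vmon (posmon w) = vmon (negmon w)"
  shows "phi (binom w :: 'k::field epoly) = 0"
proof (cases "posmon w = negmon w")
  case True
  then show ?thesis by (simp add: binom_def phi_def)
next
  case False
  then have "phi (binom w :: 'k epoly)
      = Poly_Mapping.single (vmon (posmon w)) 1 + Poly_Mapping.single (vmon (negmon w)) (-1)"
    by (simp add: phi_def keys_binom lookup_binom)
  then show ?thesis
    by (simp add: assms flip: single_add)
qed

lemma int_sum_nat_pos_neg:
  "int (\<Sum>e\<in>S. c e * nat (w e)) - int (\<Sum>e\<in>S. c e * nat (- w e))
    = (\<Sum>e\<in>S. int (c e) * w e)"
  by (simp add: of_nat_sum sum_subtractf[symmetric] algebra_simps, rule sum.cong) auto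

lemma deg_binom:
  assumes "finite S" "{e. w e \<noteq> 0} \<subseteq> S" "w e \<noteq> 0" "(\<Sum>e\<in>S. w e) = 0"
  shows "2 * int (deg (binom w :: 'k::field epoly)) = (\<Sum>e\<in>S. \<bar>w e\<bar>)"
proof -
  have fin: "finite {e. w e \<noteq> 0}"
    using assms(1,2) by (rule finite_subset[rotated])
  have pos: "mdeg (posmon w) = (\<Sum>e\<in>S. nat (w e))"
    unfolding mdeg_def using assms(1,2) by (rule sum_keys_posmon) simp
  have neg: "mdeg (negmon w) = (\<Sum>e\<in>S. nat (- w e))"
    unfolding mdeg_def negmon_eq_posmon using assms(1,2) by (intro sum_keys_posmon) auto
  have "int (\<Sum>e\<in>S. nat (w e)) - int (\<Sum>e\<in>S. nat (- w e)) = 0"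
    using int_sum_nat_pos_neg[of "\<lambda>_. 1" w S] assms(4) by simp
  moreover have "int (\<Sum>e\<in>S. nat (w e)) + int (\<Sum>e\<in>S. nat (- w e)) = (\<Sum>e\<in>S. \<bar>w e\<bar>)"
    by (simp add: of_nat_sum sum.distrib[symmetric], rule sum.cong) auto
  moreover have "deg (binom w :: 'k epoly) = max (mdeg (posmon w)) (mdeg (negmon w))"
    using posmon_neq_negmon[OF fin assms(3)] by (simp add: deg_def keys_binom)
  ultimately show ?thesis
    unfolding pos neg by linarith
qed

lemma phi_binom_balanced:
  assumes "finite S" "{e. w e \<noteq> 0} \<subseteq> S" "\<And>n. (\<Sum>e\<in>S. int (incidence e n) * w e) = 0"
  shows "phi (binom w :: 'k::field epoly) = 0"
proof (rule phi_binom_eq_0, rule poly_mapping_eqI)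
  fix n
  have "Poly_Mapping.lookup (vmon (posmon w)) n = (\<Sum>e\<in>S. incidence e n * nat (w e))"
    unfolding lookup_vmon using assms(1,2) by (rule sum_keys_posmon) simp
  moreover have "Poly_Mapping.lookup (vmon (negmon w)) n = (\<Sum>e\<in>S. incidence e n * nat (- w e))"
    unfolding lookup_vmon negmon_eq_posmon using assms(1,2) by (intro sum_keys_posmon) auto
  moreover have
    "int (\<Sum>e\<in>S. incidence e n * nat (w e)) - int (\<Sum>e\<in>S. incidence e n * nat (- w e)) = 0"
    by (simp only: int_sum_nat_pos_neg assms(3))
  ultimately show
    "Poly_Mapping.lookup (vmon (posmon w)) n = Poly_Mapping.lookup (vmon (negmon w)) n"
    by linarith
qed

section \<open>Moving the final triangle\<close>

text \<open>The part of a weight that the recursion keeps when the largest vertex is h + 2.\<close>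

definition supported_below :: "nat \<Rightarrow> weight \<Rightarrow> bool" where
  "supported_below h b \<longleftrightarrow> (\<forall>e. b e \<noteq> 0 \<longrightarrow> inE e \<and> edge_le e (h - 2, h))"

lemma maxv_add_end_triangle:
  assumes "supported_below h b" "c \<noteq> 0"
  shows "maxv (\<lambda>e. b e + edge_weight (end_triangle h c) e) = h + 2"
proof -
  let ?V = "{n. \<exists>e. b e + edge_weight (end_triangle h c) e \<noteq> 0 \<and> (n = fst e \<or> n = snd e)}"
  have "?V \<subseteq> {..h + 2}"
    using assms(1)
    by (fastforce simp: supported_below_def edge_le_def edge_weight_end_triangle split: if_splits)
  moreover have "b (h + 1, h + 2) = 0"
    using assms(1) by (force simp: supported_below_def edge_le_def)
  then have "h + 2 \<in> ?V"
    using assms(2)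
    by (intro CollectI exI[of _ "(h + 1, h + 2)"]) (simp add: edge_weight_end_triangle)
  ultimately show ?thesis
    unfolding maxv_def by (intro Max_eqI) (auto intro: finite_subset)
qed

lemma step1_add_end_triangle:
  assumes "supported_below h b" "c \<noteq> 0" "0 < h"
  shows "step1 (\<lambda>e. b e + edge_weight (end_triangle h c) e)
    = (\<lambda>e. b e + (if e = (h, h + 2) then 2 * c else 0)
        + edge_weight (end_triangle (h + 2) (- c)) e)"
proof (intro ext, clarify)
  fix i j
  let ?T = "\<lambda>h c e. edge_weight (end_triangle h c) e"
  have b0: "b (a, a') = 0" if "\<not> (inE (a, a') \<and> a \<le> h - 2 \<and> a' \<le> h)" for a a'
    using assms(1) that by (auto simp: supported_below_def edge_le_def)
  have step: "step1 (\<lambda>e. b e + ?T h c e) (i, j) =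
     (if \<not> inE (i, j) then 0
      else if i \<le> h - 2 \<and> j \<le> h then b (i, j) + ?T h c (i, j)
      else if (i, j) = (h, h + 2) then 2 * (b (i, j) + ?T h c (i, j))
      else if h + 2 \<le> i \<and> h + 3 \<le> j then - (b (i - 2, j - 2) + ?T h c (i - 2, j - 2))
      else 0)"
    by (simp add: step1_def maxv_add_end_triangle[OF assms(1,2)] edge_le_def numeral_eq_Suc)
  consider "\<not> inE (i, j)" | "inE (i, j)" "i \<le> h - 2" "j \<le> h"
    | "inE (i, j)" "(i, j) = (h, h + 2)" | "inE (i, j)" "h + 2 \<le> i" "h + 3 \<le> j"
    | "inE (i, j)" "\<not> (i \<le> h - 2 \<and> j \<le> h)" "(i, j) \<noteq> (h, h + 2)"
      "\<not> (h + 2 \<le> i \<and> h + 3 \<le> j)"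
    by blast
  then show "step1 (\<lambda>e. b e + ?T h c e) (i, j)
      = b (i, j) + (if (i, j) = (h, h + 2) then 2 * c else 0) + ?T (h + 2) (- c) (i, j)"
  proof cases
    case 1
    moreover have "(i, j) \<noteq> (h, h + 2)"
      using 1 \<open>0 < h\<close> by (auto simp: inE_def)
    ultimately show ?thesis
      unfolding step using b0[of i j] edge_weight_end_triangle_outside_E[of "h + 2"] by auto
  next
    case 2
    then show ?thesis
      unfolding step using \<open>0 < h\<close> by (auto simp: edge_weight_end_triangle)
  next
    case 3
    then show ?thesis
      unfolding step using b0[of h "h + 2"] \<open>0 < h\<close> by (auto simp: edge_weight_end_triangle)
  next
    case 4
    moreover have "b (i, j) = 0" "b (i - 2, j - 2) = 0"
      using 4 \<open>0 < h\<close> by (intro b0; arith)+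
    moreover have "i - 2 + 2 = i" "j - 2 + 2 = j"
      using 4 by arith+
    then have "?T (h + 2) (- c) (i, j) = - ?T h c (i - 2, j - 2)"
      by (metis edge_weight_end_triangle_shift edge_weight_end_triangle_uminus)
    ultimately show ?thesis
      unfolding step by simp
  next
    case 5
    then have "b (i, j) = 0" "?T (h + 2) (- c) (i, j) = 0"
      by (auto intro!: b0 simp: edge_weight_end_triangle)
    moreover have "step1 (\<lambda>e. b e + ?T h c e) (i, j) = 0"
      unfolding step using 5 by auto
    ultimately show ?thesis
      using 5 by auto
  qed
qed

lemma step2_add_end_triangle:
  assumes "supported_below h b" "c \<noteq> 0" "0 < h"
  shows "step2 (\<lambda>e. b e + edge_weight (end_triangle h c) e)
    = (\<lambda>e. b e + (if e = (h, h + 1) then 2 * c else 0)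
        + (if e = (h + 1, h + 3) then - 2 * c else 0) + edge_weight (end_triangle (h + 3) c) e)"
proof (intro ext, clarify)
  fix i j
  let ?T = "\<lambda>h c e. edge_weight (end_triangle h c) e"
  have b0: "b (a, a') = 0" if "\<not> (inE (a, a') \<and> a \<le> h - 2 \<and> a' \<le> h)" for a a'
    using assms(1) that by (auto simp: supported_below_def edge_le_def)
  have apex: "b (h, h + 1) + ?T h c (h, h + 1) = c"
    using b0[of h "h + 1"] \<open>0 < h\<close> by (simp add: edge_weight_end_triangle)
  have step: "step2 (\<lambda>e. b e + ?T h c e) (i, j) =
     (if \<not> inE (i, j) then 0
      else if i \<le> h - 2 \<and> j \<le> h then b (i, j) + ?T h c (i, j)
      else if (i, j) = (h, h + 1) then 2 * (b (i, j) + ?T h c (i, j))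
      else if (i, j) = (h + 1, h + 3) then - 2 * (b (h, h + 1) + ?T h c (h, h + 1))
      else if h + 3 \<le> i \<and> h + 4 \<le> j then b (i - 3, j - 3) + ?T h c (i - 3, j - 3)
      else 0)"
    by (simp add: step2_def maxv_add_end_triangle[OF assms(1,2)] edge_le_def numeral_eq_Suc)
  consider "\<not> inE (i, j)" | "inE (i, j)" "i \<le> h - 2" "j \<le> h"
    | "inE (i, j)" "(i, j) = (h, h + 1)" | "inE (i, j)" "(i, j) = (h + 1, h + 3)"
    | "inE (i, j)" "h + 3 \<le> i" "h + 4 \<le> j"
    | "inE (i, j)" "\<not> (i \<le> h - 2 \<and> j \<le> h)" "(i, j) \<noteq> (h, h + 1)" "(i, j) \<noteq> (h + 1, h + 3)"
      "\<not> (h + 3 \<le> i \<and> h + 4 \<le> j)"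
    by blast
  then show "step2 (\<lambda>e. b e + ?T h c e) (i, j)
      = b (i, j) + (if (i, j) = (h, h + 1) then 2 * c else 0)
        + (if (i, j) = (h + 1, h + 3) then - 2 * c else 0) + ?T (h + 3) c (i, j)"
  proof cases
    case 1
    moreover have "(i, j) \<noteq> (h, h + 1)" "(i, j) \<noteq> (h + 1, h + 3)"
      using 1 \<open>0 < h\<close> by (auto simp: inE_def)
    ultimately show ?thesis
      unfolding step using b0[of i j] edge_weight_end_triangle_outside_E[of "h + 3"] by auto
  next
    case 2
    then show ?thesis
      unfolding step using \<open>0 < h\<close> by (auto simp: edge_weight_end_triangle)
  next
    case 3
    then show ?thesis
      unfolding step using apex by (auto simp: edge_weight_end_triangle)
  next
    case 4
    then show ?thesis
      unfolding step using apex b0[of "h + 1" "h + 3"] by (auto simp: edge_weight_end_triangle)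
  next
    case 5
    moreover have "b (i, j) = 0" "b (i - 3, j - 3) = 0"
      using 5 \<open>0 < h\<close> by (intro b0; arith)+
    moreover have "i - 3 + 3 = i" "j - 3 + 3 = j"
      using 5 by arith+
    then have "?T (h + 3) c (i, j) = ?T h c (i - 3, j - 3)"
      by (metis edge_weight_end_triangle_shift)
    ultimately show ?thesis
      unfolding step by simp
  next
    case 6
    then have "b (i, j) = 0" "?T (h + 3) c (i, j) = 0"
      by (auto intro!: b0 simp: edge_weight_end_triangle)
    moreover have "step2 (\<lambda>e. b e + ?T h c e) (i, j) = 0"
      unfolding step using 6 by auto
    ultimately show ?thesis
      using 6 by auto
  qed
qed

section \<open>Admissible paths\<close>

text \<open>The vertex sequences i_1, ..., i_l of the paths in (a); the two rules mirror the two
  recursions, i_l being k - 2.\<close>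

inductive admissible_path :: "nat list \<Rightarrow> bool" where
  start: "admissible_path [3, 5]"
| long_step: "admissible_path p \<Longrightarrow> admissible_path (p @ [last p + 2])"
| short_long_step: "admissible_path p \<Longrightarrow> admissible_path (p @ [last p + 1, last p + 3])"

lemma admissible_path_start: "admissible_path p \<Longrightarrow> \<exists>q. p = 3 # 5 # q"
  by (induction rule: admissible_path.induct) auto

lemma admissible_path_end: "admissible_path p \<Longrightarrow> \<exists>q h. p = q @ [h, h + 2] \<and> 3 \<le> h"
proof (induction rule: admissible_path.induct)
  case (long_step p)
  then obtain q h where "p = q @ [h, h + 2]" "3 \<le> h" by blast
  then show ?case by (intro exI[of _ "q @ [h]"] exI[of _ "h + 2"]) simp
qed force+

lemma admissible_path_steps:
  "admissible_path p \<Longrightarrow> successively (\<lambda>a b. b = a + 1 \<or> b = a + 2) p"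
  by (induction rule: admissible_path.induct) (auto simp: successively_append_iff)

lemma admissible_path_sorted: "admissible_path p \<Longrightarrow> sorted_wrt (<) p"
  by (auto simp: successively_conv_sorted_wrt[symmetric] transp_on_def
      intro: successively_mono[OF admissible_path_steps])

lemma admissible_path_gap:
  "admissible_path p \<Longrightarrow> m + 2 < length p \<Longrightarrow> p ! m + 3 \<le> p ! (m + 2)"
proof (induction arbitrary: m rule: admissible_path.induct)
  case (long_step p)
  then obtain q h where p: "p = q @ [h, h + 2]"
    using admissible_path_end by blast
  show ?case
  proof (cases "m + 2 < length p")
    case False
    with long_step.prems have "m = length q" by (simp add: p)
    then show ?thesis by (simp add: p nth_append)
  qed (use long_step in \<open>simp add: nth_append\<close>)
next
  case (short_long_step p)
  then obtain q h where p: "p = q @ [h, h + 2]"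
    using admissible_path_end by blast
  show ?case
  proof (cases "m + 2 < length p")
    case False
    with short_long_step.prems have "m = length q \<or> m = Suc (length q)" by (auto simp: p)
    then show ?thesis by (auto simp: p nth_append)
  qed (use short_long_step in \<open>simp add: nth_append\<close>)
qed simp

lemma admissible_path_ends:
  assumes "admissible_path p"
  shows "2 \<le> length p" "p ! 0 = 3" "p ! 1 = 5" "hd p = 3"
    "p ! (length p - 2) = last p - 2" "p ! (length p - 1) = last p" "5 \<le> last p"
proof -
  obtain q where "p = 3 # 5 # q"
    using admissible_path_start[OF assms] by blast
  then show "2 \<le> length p" "p ! 0 = 3" "p ! 1 = 5" "hd p = 3" "p ! (length p - 1) = last p"
    by (simp_all add: last_conv_nth)
  obtain q h where "p = q @ [h, h + 2]" "3 \<le> h"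
    using admissible_path_end[OF assms] by blast
  then show "p ! (length p - 2) = last p - 2" "5 \<le> last p"
    by (simp_all add: nth_append)
qed

lemma admissible_path_nth_mono:
  "admissible_path p \<Longrightarrow> i \<le> j \<Longrightarrow> j < length p \<Longrightarrow> p ! i \<le> p ! j"
  by (metis admissible_path_sorted sorted_nth_mono strict_sorted_imp_sorted)

lemma path_edge_bounds:
  assumes "admissible_path p" "Suc m < length p"
  shows "inE (p ! m, p ! Suc m) \<and> 3 \<le> p ! m \<and> p ! m + 2 \<le> last p \<and> p ! Suc m \<le> last p"
proof -
  have "p ! Suc m = p ! m + 1 \<or> p ! Suc m = p ! m + 2"
    using successively_nth[OF admissible_path_steps[OF assms(1)] assms(2)] by simp
  moreover have "p ! 0 \<le> p ! m" "p ! m \<le> p ! (length p - 2)" "p ! Suc m \<le> p ! (length p - 1)"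
    using assms by (auto intro!: admissible_path_nth_mono)
  ultimately show ?thesis
    using admissible_path_ends[OF assms(1)] by (auto simp: inE_def)
qed

lemma admissible_path_edges:
  assumes "admissible_path p"
  shows "\<forall>m < length p - 1. inE (p ! m, p ! (m+1))"
    and "\<forall>m < length p - 2. edge_less (p ! m, p ! (m+1)) (p ! (m+1), p ! (m+2))"
    and "\<forall>m < length p - 2. \<not> (p ! (m+1) = p ! m + 1 \<and> p ! (m+2) = p ! (m+1) + 1)"
proof -
  have increasing: "p ! m < p ! (m + 1)" "p ! (m + 1) < p ! (m + 2)" if "m < length p - 2" for m
    using that sorted_wrt_nth_less[OF admissible_path_sorted[OF assms]] by auto
  have gap: "p ! m + 3 \<le> p ! (m + 2)" if "m < length p - 2" for m
    using that by (intro admissible_path_gap[OF assms]) linarith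
  show "\<forall>m < length p - 1. inE (p ! m, p ! (m+1))"
    using path_edge_bounds[OF assms] by simp
  show "\<forall>m < length p - 2. edge_less (p ! m, p ! (m+1)) (p ! (m+1), p ! (m+2))"
    using increasing by (fastforce simp: edge_less_def edge_le_def)
  show "\<forall>m < length p - 2. \<not> (p ! (m+1) = p ! m + 1 \<and> p ! (m+2) = p ! (m+1) + 1)"
    using gap by fastforce
qed

section \<open>Shape weights\<close>

definition start_triangle :: "(edge \<times> int) list" where
  "start_triangle = [((1, 2), 1), ((1, 3), -1), ((2, 3), -1)]"

definition path_edges :: "nat list \<Rightarrow> (edge \<times> int) list" where
  "path_edges p = map (\<lambda>m. ((p ! m, p ! (m + 1)), 2 * (-1) ^ m)) [0..<length p - 1]"

text \<open>The sign of the final triangle is the one that balances the weights at the vertex last p.\<close>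

definition shape_edges :: "nat list \<Rightarrow> (edge \<times> int) list" where
  "shape_edges p = start_triangle @ path_edges p @ end_triangle (last p) (- ((-1) ^ length p))"

lemma path_edges_snoc:
  assumes "p \<noteq> []"
  shows "path_edges (p @ [x]) = path_edges p @ [((last p, x), - 2 * (-1) ^ length p)]"
proof -
  obtain n where n: "length p = Suc n"
    using assms by (cases p) auto
  have "[0..<length (p @ [x]) - 1] = [0..<length p - 1] @ [length p - 1]"
    by (simp add: n)
  moreover have "(p @ [x]) ! (length p - 1) = last p"
    using assms by (simp add: nth_append last_conv_nth)
  ultimately show ?thesis
    using assms by (auto simp: path_edges_def nth_append n)
qed

lemma fst_set_path_edges: "fst ` set (path_edges p) = {(p ! m, p ! Suc m) |m. Suc m < length p}"
  unfolding path_edges_def by force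

lemma sum_abs_path_edges: "(\<Sum>(e, v)\<leftarrow>path_edges p. \<bar>v\<bar>) = 2 * int (length p - 1)"
  by (simp add: path_edges_def comp_def abs_mult sum_list_triv)

lemma sum_path_edges: "p \<noteq> [] \<Longrightarrow> (\<Sum>(e, v)\<leftarrow>path_edges p. v) = 1 + (-1) ^ length p"
proof (induction p rule: rev_nonempty_induct)
  case (snoc x p)
  then show ?case by (simp add: path_edges_snoc)
qed (simp add: path_edges_def)

lemma balance_path_edges:
  "p \<noteq> [] \<Longrightarrow> (\<Sum>(e, v)\<leftarrow>path_edges p. int (incidence e n) * v)
     = 2 * of_bool (n = hd p) + 2 * (-1) ^ length p * of_bool (n = last p)"
proof (induction p rule: rev_nonempty_induct)
  case (snoc x p)
  then show ?case by (simp add: path_edges_snoc incidence_def)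
qed (simp add: path_edges_def)

lemma sum_shape_edges: "p \<noteq> [] \<Longrightarrow> (\<Sum>(e, v)\<leftarrow>shape_edges p. v) = 0"
  by (simp add: shape_edges_def start_triangle_def end_triangle_def sum_path_edges)

lemma sum_abs_shape_edges:
  "p \<noteq> [] \<Longrightarrow> (\<Sum>(e, v)\<leftarrow>shape_edges p. \<bar>v\<bar>) = 2 * int (length p + 2)"
  by (cases p)
    (simp_all add: shape_edges_def start_triangle_def end_triangle_def sum_abs_path_edges abs_mult)

lemma balance_shape_edges:
  "p \<noteq> [] \<Longrightarrow> hd p = 3 \<Longrightarrow> (\<Sum>(e, v)\<leftarrow>shape_edges p. int (incidence e n) * v) = 0"
  by (simp add: shape_edges_def balance_path_edges)
    (simp add: start_triangle_def end_triangle_def incidence_def)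

lemma distinct_shape_edges:
  assumes "admissible_path p"
  shows "distinct (map fst (shape_edges p))"
proof -
  have "inj_on (\<lambda>m. (p ! m, p ! (m + 1))) {0..<length p - 1}"
    using admissible_path_sorted[OF assms]
    by (intro inj_onI) (auto simp: strict_sorted_iff nth_eq_iff_index_eq)
  then have "distinct (map fst (path_edges p))"
    by (simp add: path_edges_def distinct_map comp_def)
  moreover have "fst ` set (path_edges p) \<inter> fst ` set start_triangle = {}"
    "fst ` set (path_edges p) \<inter> fst ` set (end_triangle (last p) c) = {}"
    "fst ` set start_triangle \<inter> fst ` set (end_triangle (last p) c) = {}" for c
    using admissible_path_ends(7)[OF assms]
    by (auto simp: fst_set_path_edges start_triangle_def end_triangle_def
        dest!: path_edge_bounds[OF assms])
  ultimately show ?thesis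
    by (auto simp: shape_edges_def start_triangle_def end_triangle_def)
qed

lemma shape_edges_nonzero: "(e, v) \<in> set (shape_edges p) \<Longrightarrow> v \<noteq> 0"
  by (auto simp: shape_edges_def start_triangle_def end_triangle_def path_edges_def)

lemma support_shape_edges:
  assumes "admissible_path p"
  shows "{e. edge_weight (shape_edges p) e \<noteq> 0} = fst ` set (shape_edges p)"
proof
  show "{e. edge_weight (shape_edges p) e \<noteq> 0} \<subseteq> fst ` set (shape_edges p)"
    using edge_weight_eq_0 by blast
  show "fst ` set (shape_edges p) \<subseteq> {e. edge_weight (shape_edges p) e \<noteq> 0}"
    using edge_weight_eq[OF distinct_shape_edges[OF assms]] shape_edges_nonzero by fastforce
qed

lemma fst_set_shape_edges:
  "fst ` set (shape_edges p) = {(1, 2), (1, 3), (2, 3), (last p, last p + 1), (last p, last p + 2),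
     (last p + 1, last p + 2)} \<union> {(p ! m, p ! Suc m) |m. Suc m < length p}"
  by (auto simp: shape_edges_def start_triangle_def end_triangle_def fst_set_path_edges)

lemma edge_weight_shape_edges:
  "edge_weight (shape_edges p) = (\<lambda>e. edge_weight (start_triangle @ path_edges p) e
     + edge_weight (end_triangle (last p) (- ((-1) ^ length p))) e)"
  by (simp add: shape_edges_def fun_eq_iff)

lemma supported_below_shape_body:
  assumes "admissible_path p"
  shows "supported_below (last p) (edge_weight (start_triangle @ path_edges p))"
  unfolding supported_below_def
proof (intro allI impI)
  fix e
  assume "edge_weight (start_triangle @ path_edges p) e \<noteq> 0"
  then have "e \<in> fst ` set start_triangle \<union> fst ` set (path_edges p)"
    using edge_weight_eq_0[of e "start_triangle @ path_edges p"] by auto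
  then show "inE e \<and> edge_le e (last p - 2, last p)"
    using admissible_path_ends(7)[OF assms]
    by (auto simp: start_triangle_def fst_set_path_edges inE_def edge_le_def
        dest!: path_edge_bounds[OF assms])
qed

lemma maxv_shape_edges: "admissible_path p \<Longrightarrow> maxv (edge_weight (shape_edges p)) = last p + 2"
  unfolding edge_weight_shape_edges
  by (rule maxv_add_end_triangle[OF supported_below_shape_body]) simp_all

lemma step1_shape_edges:
  assumes "admissible_path p"
  shows "step1 (edge_weight (shape_edges p)) = edge_weight (shape_edges (p @ [last p + 2]))"
proof -
  let ?c = "- ((-1) ^ length p) :: int"
  have "p \<noteq> []" "0 < last p"
    using admissible_path_ends[OF assms] by auto
  then have "edge_weight (shape_edges (p @ [last p + 2]))
      = (\<lambda>e. edge_weight (start_triangle @ path_edges p) e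
          + (if e = (last p, last p + 2) then 2 * ?c else 0)
          + edge_weight (end_triangle (last p + 2) (- ?c)) e)"
    by (auto simp: fun_eq_iff shape_edges_def path_edges_snoc)
  then show ?thesis
    using step1_add_end_triangle[OF supported_below_shape_body[OF assms], of ?c] \<open>0 < last p\<close>
    by (simp add: edge_weight_shape_edges)
qed

lemma step2_shape_edges:
  assumes "admissible_path p"
  shows "step2 (edge_weight (shape_edges p))
    = edge_weight (shape_edges (p @ [last p + 1, last p + 3]))"
proof -
  let ?c = "- ((-1) ^ length p) :: int"
  have "p \<noteq> []" "0 < last p"
    using admissible_path_ends[OF assms] by auto
  then have "path_edges (p @ [last p + 1, last p + 3])
      = path_edges p @ [((last p, last p + 1), 2 * ?c), ((last p + 1, last p + 3), - 2 * ?c)]"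
    using path_edges_snoc[of "p @ [last p + 1]" "last p + 3"] path_edges_snoc[of p "last p + 1"]
    by simp
  then have "edge_weight (shape_edges (p @ [last p + 1, last p + 3]))
      = (\<lambda>e. edge_weight (start_triangle @ path_edges p) e
          + (if e = (last p, last p + 1) then 2 * ?c else 0)
          + (if e = (last p + 1, last p + 3) then - 2 * ?c else 0)
          + edge_weight (end_triangle (last p + 3) ?c) e)"
    by (auto simp: fun_eq_iff shape_edges_def)
  then show ?thesis
    using step2_add_end_triangle[OF supported_below_shape_body[OF assms], of ?c] \<open>0 < last p\<close>
    by (simp add: edge_weight_shape_edges)
qed

lemma W_eq_shape_edges:
  "set s \<subseteq> {1, 2}
    \<Longrightarrow> \<exists>p. admissible_path p \<and> length p = sum_list s + 2 \<and> W s = edge_weight (shape_edges p)"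
proof (induction s rule: rev_induct)
  case Nil
  have "W [] = edge_weight (shape_edges [3, 5])"
    by (auto simp: W_def w0_def shape_edges_def start_triangle_def end_triangle_def path_edges_def)
  then show ?case
    using admissible_path.start by fastforce
next
  case (snoc t s)
  then obtain p where p: "admissible_path p" "length p = sum_list s + 2"
    "W s = edge_weight (shape_edges p)"
    by auto
  have W: "W (s @ [t]) = step t (W s)"
    by (simp add: W_def)
  from snoc.prems consider "t = 1" | "t = 2"
    by auto
  then show ?case
  proof cases
    case 1
    then show ?thesis
      using p W step1_shape_edges[OF p(1)] admissible_path.long_step[OF p(1)]
      by (intro exI[of _ "p @ [last p + 2]"]) (simp add: step_def)
  next
    case 2
    then show ?thesis
      using p W step2_shape_edges[OF p(1)] admissible_path.short_long_step[OF p(1)]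
      by (intro exI[of _ "p @ [last p + 1, last p + 3]"]) (simp add: step_def)
  qed
qed

lemma binom_shape_edges:
  assumes "admissible_path p"
  shows "deg (binom (edge_weight (shape_edges p)) :: 'k::field epoly) = length p + 2"
    and "phi (binom (edge_weight (shape_edges p)) :: 'k::field epoly) = 0"
proof -
  let ?l = "shape_edges p"
  let ?S = "fst ` set ?l"
  have distinct: "distinct (map fst ?l)" and "p \<noteq> []" "hd p = 3"
    using distinct_shape_edges[OF assms] admissible_path_ends[OF assms] by auto
  have support: "{e. edge_weight ?l e \<noteq> 0} \<subseteq> ?S"
    using edge_weight_eq_0 by blast
  have "edge_weight ?l (1, 2) \<noteq> 0"
    using edge_weight_eq[OF distinct, of "(1, 2)" 1]
    by (simp add: shape_edges_def start_triangle_def)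
  moreover have "(\<Sum>e\<in>?S. edge_weight ?l e) = 0"
    using sum_edge_weight[OF distinct, of "\<lambda>_ v. v"] sum_shape_edges[OF \<open>p \<noteq> []\<close>] by simp
  moreover have "(\<Sum>e\<in>?S. \<bar>edge_weight ?l e\<bar>) = 2 * int (length p + 2)"
    using sum_edge_weight[OF distinct, of "\<lambda>_ v. \<bar>v\<bar>"] sum_abs_shape_edges[OF \<open>p \<noteq> []\<close>]
    by simp
  ultimately have "2 * int (deg (binom (edge_weight ?l) :: 'k epoly)) = 2 * int (length p + 2)"
    using deg_binom[OF _ support, of "(1, 2)", where 'k = 'k] by simp
  then show "deg (binom (edge_weight ?l) :: 'k epoly) = length p + 2"
    by simp
  have "(\<Sum>e\<in>?S. int (incidence e n) * edge_weight ?l e) = 0" for n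
    using sum_edge_weight[OF distinct, of "\<lambda>e v. int (incidence e n) * v"]
      balance_shape_edges[OF \<open>p \<noteq> []\<close> \<open>hd p = 3\<close>] by simp
  then show "phi (binom (edge_weight ?l) :: 'k epoly) = 0"
    using phi_binom_balanced[OF _ support] by simp
qed

lemma shape_edges_structure:
  assumes "admissible_path p"
  defines "w \<equiv> edge_weight (shape_edges p)" and "h \<equiv> last p"
  shows "{e. w e \<noteq> 0} = {(1,2), (1,3), (2,3), (h,h+1), (h,h+2), (h+1,h+2)} \<union>
           {(p ! m, p ! (m+1)) | m. m < length p - 1}"
    and "\<forall>m < length p - 1. w (p ! m, p ! (m+1)) \<in> {2, -2}"
    and "\<forall>m < length p - 2. w (p ! (m+1), p ! (m+2)) = - w (p ! m, p ! (m+1))"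
    and "w (1,3) = -1" "w (2,3) = -1" "w (1,2) = 1"
    and "w (h,h+1) = w (h,h+2)" "w (h,h+2) = - w (h+1,h+2)" "w (h+1,h+2) \<in> {1, -1}"
proof -
  have weight: "w e = v" if "(e, v) \<in> set (shape_edges p)" for e v
    unfolding w_def using distinct_shape_edges[OF assms(1)] that by (rule edge_weight_eq)
  have path: "w (p ! m, p ! (m + 1)) = 2 * (-1) ^ m" if "m < length p - 1" for m
    using that by (intro weight) (force simp: shape_edges_def path_edges_def)
  have signs: "(-1 :: int) ^ n \<in> {1, -1}" for n
    by (cases "even n") auto
  show "{e. w e \<noteq> 0} = {(1,2), (1,3), (2,3), (h,h+1), (h,h+2), (h+1,h+2)} \<union>
      {(p ! m, p ! (m+1)) | m. m < length p - 1}"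
    unfolding w_def h_def support_shape_edges[OF assms(1)] fst_set_shape_edges
    by (simp add: less_diff_conv)
  show "\<forall>m < length p - 1. w (p ! m, p ! (m+1)) \<in> {2, -2}"
    using path signs by auto
  show "\<forall>m < length p - 2. w (p ! (m+1), p ! (m+2)) = - w (p ! m, p ! (m+1))"
    using path by auto
  show "w (1,3) = -1" "w (2,3) = -1" "w (1,2) = 1"
    by (auto intro!: weight simp: shape_edges_def start_triangle_def)
  have "w (h,h+1) = - ((-1) ^ length p)" "w (h,h+2) = - ((-1) ^ length p)"
    "w (h+1,h+2) = (-1) ^ length p"
    by (auto intro!: weight simp: shape_edges_def end_triangle_def h_def)
  then show "w (h,h+1) = w (h,h+2)" "w (h,h+2) = - w (h+1,h+2)" "w (h+1,h+2) \<in> {1, -1}"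
    using signs by simp_all
qed

theorem proposition6p5:
  fixes s :: "nat list"
  assumes "set s \<subseteq> {1, 2}"
  shows "(let w = W s; k = maxv w in
           k \<ge> 7 \<and>
           (\<exists>p :: nat list. length p \<ge> 2 \<and>
              p ! 0 = 3 \<and> p ! 1 = 5 \<and>
              p ! (length p - 2) = k - 4 \<and> p ! (length p - 1) = k - 2 \<and>
              (\<forall>m < length p - 1. inE (p ! m, p ! (m+1))) \<and>
              (\<forall>m < length p - 2. edge_less (p ! m, p ! (m+1)) (p ! (m+1), p ! (m+2))) \<and>
              {e. w e \<noteq> 0} =
                {(1,2), (1,3), (2,3), (k-2,k-1), (k-2,k), (k-1,k)} \<union>
                {(p ! m, p ! (m+1)) | m. m < length p - 1} \<and>
              (\<forall>m < length p - 1. w (p ! m, p ! (m+1)) \<in> {2, -2}) \<and>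
              (\<forall>m < length p - 2. w (p ! (m+1), p ! (m+2)) = - w (p ! m, p ! (m+1))) \<and>
              (\<forall>m < length p - 2. \<not> (p ! (m+1) = p ! m + 1 \<and> p ! (m+2) = p ! (m+1) + 1))) \<and>
           w (1,3) = -1 \<and> w (2,3) = -1 \<and> w (1,2) = 1 \<and>
           w (k-2,k-1) = w (k-2,k) \<and> w (k-2,k) = - w (k-1,k) \<and> w (k-1,k) \<in> {1, -1})
         \<and> deg (binom (W s) :: 'k::field epoly) = 4 + sum_list s
         \<and> phi (binom (W s) :: 'k::field epoly) = 0"
proof -
  obtain p where p: "admissible_path p" "length p = sum_list s + 2"
    and W: "W s = edge_weight (shape_edges p)"
    using W_eq_shape_edges[OF assms] by blast
  have k: "maxv (W s) = last p + 2"
    using maxv_shape_edges[OF p(1)] W by simp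
  have "last p \<ge> 5"
    using admissible_path_ends(7)[OF p(1)] .
  then have arith: "last p + 2 - 4 = last p - 2" "last p + 2 - 2 = last p"
    "last p + 2 - 1 = last p + 1" and "last p + 2 \<ge> 7"
    by simp_all
  have "deg (binom (W s) :: 'k epoly) = 4 + sum_list s" "phi (binom (W s) :: 'k epoly) = 0"
    using binom_shape_edges[OF p(1), where 'k = 'k] p(2) W by simp_all
  then show ?thesis
    unfolding Let_def k arith
    using \<open>last p + 2 \<ge> 7\<close> admissible_path_ends[OF p(1)] admissible_path_edges[OF p(1)]
      shape_edges_structure[OF p(1), folded W]
    by (intro conjI exI[of _ p]) assumption+
qed

end
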